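(* Let $Z=(Z_t)_{t\ge0}$ be an irreducible continuous-time Markov chain on $\mathbb{N}_+$ with jump rates $(q_{ij})$ and generator $\mathscr{L}g(n)=\sum_{j\ne n}q_{nj}(g(j)-g(n))$ (possibly explosive). Suppose there exist a bounded strictly positive function $g$ on $\mathbb{N}_+$ with $\lim_{n\to\infty}g(n)=0$ and an eventually strictly positive function $d$ on $\mathbb{N}_+$ such that for all sufficiently large $a$, $\mathscr{L}g(n)\le d(a)g(n)$ holds for all $n>a$. Then for all $a,t>0$, $$\lim_{n\to\infty}\mathbf{P}_n\{\kappa_a^-<t\wedge\kappa_\infty^+\}=0.$$
   Context: $\mathbf{P}_n$ is the law of $Z$ started from $Z_0=n$. $\kappa_a^-=\inf\{t>0:Z_t\le a\}$, $\kappa_b^+=\inf\{t>0:Z_t\ge b\}$, and $\kappa_\infty^+=\lim_{b\to\infty}\kappa_b^+$ (the explosion time). *)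

theory Defs
  imports "HOL-Probability.Probability"
begin

definition states :: "nat set" where "states = {1..}"

definition qtot :: "(nat \<Rightarrow> nat \<Rightarrow> real) \<Rightarrow> nat \<Rightarrow> real" where
  "qtot q i = infsum (\<lambda>j. q i j) (states - {i})"

definition gen :: "(nat \<Rightarrow> nat \<Rightarrow> real) \<Rightarrow> (nat \<Rightarrow> real) \<Rightarrow> nat \<Rightarrow> real" where
  "gen q g n = infsum (\<lambda>j. q n j * (g j - g n)) (states - {n})"

definition irreducible_rates :: "(nat \<Rightarrow> nat \<Rightarrow> real) \<Rightarrow> bool" where
  "irreducible_rates q \<longleftrightarrow>
     (\<forall>i\<in>states. \<forall>j\<in>states.
        (i, j) \<in> {(k, l). k \<in> states \<and> l \<in> states \<and> k \<noteq> l \<and> q k l > 0}\<^sup>*)"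

text \<open>Canonical construction of the (minimal) chain: an i.i.d. stream of pairs (U_k, V_k),
  uniform on (0,1)^2. The embedded jump chain moves from i to j with probability q i j / q_i
  (inverse-CDF selection with U_k) and the k-th holding time is -ln V_k / q_{X_k},
  exponential with rate q_{X_k}.\<close>

definition unif01 :: "real measure" where
  "unif01 = uniform_measure lborel {0<..<1}"

definition path_space :: "(real \<times> real) stream measure" where
  "path_space = stream_space (unif01 \<Otimes>\<^sub>M unif01)"

definition jump_step :: "(nat \<Rightarrow> nat \<Rightarrow> real) \<Rightarrow> nat \<Rightarrow> real \<Rightarrow> nat" where
  "jump_step q i u =
     (LEAST j. j \<in> states \<and> j \<noteq> i \<and> u * qtot q i < (\<Sum>k\<in>{1..j} - {i}. q i k))"

primrec jump_chain :: "(nat \<Rightarrow> nat \<Rightarrow> real) \<Rightarrow> nat \<Rightarrow> (real \<times> real) stream \<Rightarrow> nat \<Rightarrow> nat" where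
  "jump_chain q n \<omega> 0 = n"
| "jump_chain q n \<omega> (Suc k) = jump_step q (jump_chain q n \<omega> k) (fst (\<omega> !! k))"

definition hold :: "(nat \<Rightarrow> nat \<Rightarrow> real) \<Rightarrow> nat \<Rightarrow> (real \<times> real) stream \<Rightarrow> nat \<Rightarrow> real" where
  "hold q n \<omega> k = - ln (snd (\<omega> !! k)) / qtot q (jump_chain q n \<omega> k)"

definition jump_time :: "(nat \<Rightarrow> nat \<Rightarrow> real) \<Rightarrow> nat \<Rightarrow> (real \<times> real) stream \<Rightarrow> nat \<Rightarrow> real" where
  "jump_time q n \<omega> k = (\<Sum>i<k. hold q n \<omega> i)"

definition explosion_time :: "(nat \<Rightarrow> nat \<Rightarrow> real) \<Rightarrow> nat \<Rightarrow> (real \<times> real) stream \<Rightarrow> ereal" where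
  "explosion_time q n \<omega> = (SUP k. ereal (jump_time q n \<omega> k))"

text \<open>Z_s = X_k for J_k <= s < J_{k+1}, s < kappa_infinity. Hence
  kappa_a^- = inf {s > 0. Z_s <= a} = J_k for the first k with X_k <= a (infinite if none), and
  the event {kappa_a^- < t /\ kappa_infinity^+} is the following set.\<close>
definition hit_below_event ::
  "(nat \<Rightarrow> nat \<Rightarrow> real) \<Rightarrow> nat \<Rightarrow> real \<Rightarrow> real \<Rightarrow> (real \<times> real) stream set" where
  "hit_below_event q n a t =
     {\<omega> \<in> space path_space. \<exists>k. real (jump_chain q n \<omega> k) \<le> a
          \<and> jump_time q n \<omega> k < t \<and> ereal (jump_time q n \<omega> k) < explosion_time q n \<omega>}"

end

(*
  Fix an integer a' >= a beyond which the drift bound holds with l = d a' > 0. While the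
  embedded chain X_k stays above a', the drift condition L g <= l g makes
  exp (-l J_k) g (X_k) a supermartingale (J_k the jump times): the Laplace transform
  Q / (Q + l) of the exponential holding time exactly compensates the factor (Q + l) / Q
  by which the mean of g can grow at a jump. Stopping it when the chain first enters
  {1..a'} gives P_n (the chain enters {1..a'} before time t) <= exp (l t) g n / c with
  c = min g on {1..a'}, and the right-hand side tends to 0 with g n.
*)
theory Submission
  imports Defs
begin

section \<open>Uniform random variables\<close>

lemma space_unif01 [simp]: "space unif01 = UNIV"
  by (simp add: unif01_def)

lemma sets_unif01 [simp, measurable_cong]: "sets unif01 = sets borel"
  by (simp add: unif01_def)

lemma prob_space_unif01: "prob_space unif01"
  unfolding unif01_def by (rule prob_space_uniform_measure) auto

lemma AE_unif01: "AE u in unif01. 0 < u \<and> u < 1"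
  unfolding unif01_def by (rule AE_uniform_measureI) auto

lemma prob_space_unif01_pair: "prob_space (unif01 \<Otimes>\<^sub>M unif01)"
  by (intro prob_space_pair prob_space_unif01)

lemma AE_unif01_pair: "AE x in unif01 \<Otimes>\<^sub>M unif01. (0 < fst x \<and> fst x < 1) \<and> (0 < snd x \<and> snd x < 1)"
proof -
  interpret prob_space unif01 by (rule prob_space_unif01)
  interpret pair_sigma_finite unif01 unif01 ..
  show ?thesis
    by (rule AE_pair_measure) (measurable, use AE_unif01 in \<open>eventually_elim, use AE_unif01 in auto\<close>)
qed

lemma nn_integral_unif01_pair_mult:
  fixes G H :: "real \<Rightarrow> ennreal"
  assumes [measurable]: "G \<in> borel_measurable borel" "H \<in> borel_measurable borel"
  shows "(\<integral>\<^sup>+x. G (fst x) * H (snd x) \<partial>(unif01 \<Otimes>\<^sub>M unif01)) =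
         (\<integral>\<^sup>+u. G u \<partial>unif01) * (\<integral>\<^sup>+v. H v \<partial>unif01)"
proof -
  interpret P: prob_space unif01 by (rule prob_space_unif01)
  have m: "(\<lambda>x. G (fst x) * H (snd x)) \<in> borel_measurable (unif01 \<Otimes>\<^sub>M unif01)"
    by measurable
  have "(\<integral>\<^sup>+x. G (fst x) * H (snd x) \<partial>(unif01 \<Otimes>\<^sub>M unif01)) =
        (\<integral>\<^sup>+u. \<integral>\<^sup>+v. G u * H v \<partial>unif01 \<partial>unif01)"
    using P.nn_integral_fst[OF m] by simp
  also have "\<dots> = (\<integral>\<^sup>+u. G u * (\<integral>\<^sup>+v. H v \<partial>unif01) \<partial>unif01)"
    by (simp add: nn_integral_cmult)
  finally show ?thesis
    by (simp add: nn_integral_multc)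
qed

lemma nn_integral_unif01_powr:
  fixes r :: real assumes "r > -1"
  shows "(\<integral>\<^sup>+v. ennreal (v powr r) \<partial>unif01) = ennreal (1 / (r + 1))"
proof -
  have "((\<lambda>v. v powr r) has_integral (1 / (r + 1))) {0<..<1::real}"
    using has_integral_powr_from_0[of r 1] assms
    by (simp add: has_integral_open_interval[of _ _ "0::real" 1, simplified])
  then have "(\<integral>\<^sup>+v. ennreal (indicator {0<..<1::real} v * v powr r) \<partial>lborel) = ennreal (1 / (r + 1))"
    by (rule nn_integral_has_integral_lebesgue[rotated]) auto
  moreover have "(\<integral>\<^sup>+v. ennreal (v powr r) \<partial>unif01) =
      (\<integral>\<^sup>+v. ennreal (indicator {0<..<1::real} v * v powr r) \<partial>lborel)"
    unfolding unif01_def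
    by (subst nn_integral_uniform_measure)
       (auto simp: divide_ennreal_def intro!: nn_integral_cong split: split_indicator)
  ultimately show ?thesis
    by simp
qed

text \<open>The holding time in a state with total rate \<open>Q\<close> is \<open>-ln v / Q\<close>, so this is the
  Laplace transform \<open>Q / (Q + l)\<close> of the exponential distribution.\<close>
lemma nn_integral_unif01_exp_ln:
  fixes Q l :: real assumes "Q > 0" "l \<ge> 0"
  shows "(\<integral>\<^sup>+v. ennreal (exp (l * (ln v / Q))) \<partial>unif01) = ennreal (Q / (Q + l))"
proof -
  have "(\<integral>\<^sup>+v. ennreal (exp (l * (ln v / Q))) \<partial>unif01) = (\<integral>\<^sup>+v. ennreal (v powr (l / Q)) \<partial>unif01)"
    by (rule nn_integral_cong_AE) (use AE_unif01 in \<open>eventually_elim, simp add: powr_def\<close>)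
  also have "\<dots> = ennreal (1 / (l / Q + 1))"
    by (rule nn_integral_unif01_powr) (use assms in \<open>simp add: less_le_trans[OF _ divide_nonneg_pos]\<close>)
  also have "1 / (l / Q + 1) = Q / (Q + l)"
    using assms by (simp add: field_simps)
  finally show ?thesis .
qed

section \<open>The path space and first-step analysis\<close>

lemma prob_space_path_space: "prob_space path_space"
  unfolding path_space_def by (rule prob_space.prob_space_stream_space[OF prob_space_unif01_pair])

lemma space_path_space [simp]: "space path_space = UNIV"
  by (simp add: path_space_def space_stream_space space_pair_measure)

lemma measurable_jump_step [measurable]: "jump_step q i \<in> borel \<rightarrow>\<^sub>M count_space UNIV"
  unfolding jump_step_def[abs_def] by measurable

lemma measurable_jump_chain [measurable]:
  "(\<lambda>\<omega>. jump_chain q n \<omega> k) \<in> path_space \<rightarrow>\<^sub>M count_space UNIV"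
proof (induction k)
  case (Suc k)
  have first_coordinate: "(\<lambda>\<omega>. fst (\<omega> !! k)) \<in> path_space \<rightarrow>\<^sub>M borel"
    unfolding path_space_def by measurable
  show ?case
    by (simp, rule measurable_compose_countable'[where I=UNIV, OF _ Suc])
       (auto intro: measurable_compose[OF first_coordinate measurable_jump_step])
qed simp

lemma measurable_hold [measurable]: "(\<lambda>\<omega>. hold q n \<omega> k) \<in> path_space \<rightarrow>\<^sub>M borel"
proof -
  have [measurable]: "(\<lambda>\<omega>. snd (\<omega> !! k)) \<in> path_space \<rightarrow>\<^sub>M borel"
    unfolding path_space_def by measurable
  show ?thesis
    unfolding hold_def
    by (rule measurable_compose_countable'[where I=UNIV and g="\<lambda>\<omega>. jump_chain q n \<omega> k"
          and f="\<lambda>i \<omega>. - ln (snd (\<omega> !! k)) / qtot q i"]) auto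
qed

lemma measurable_jump_time [measurable]: "(\<lambda>\<omega>. jump_time q n \<omega> k) \<in> path_space \<rightarrow>\<^sub>M borel"
  unfolding jump_time_def by measurable

lemma jump_chain_Stream_Suc:
  "jump_chain q n (x ## \<omega>) (Suc k) = jump_chain q (jump_step q n (fst x)) \<omega> k"
  by (induction k) auto

lemma hold_Stream_Suc: "hold q n (x ## \<omega>) (Suc k) = hold q (jump_step q n (fst x)) \<omega> k"
  by (simp only: hold_def jump_chain_Stream_Suc snth.simps stream.sel)

lemma jump_time_Stream_Suc:
  "jump_time q n (x ## \<omega>) (Suc k) = - ln (snd x) / qtot q n + jump_time q (jump_step q n (fst x)) \<omega> k"
  unfolding jump_time_def sum.lessThan_Suc_shift hold_Stream_Suc by (simp add: hold_def)

definition hit_within :: "(nat \<Rightarrow> nat \<Rightarrow> real) \<Rightarrow> nat \<Rightarrow> nat \<Rightarrow> nat \<Rightarrow> real \<Rightarrow> (real \<times> real) stream set" where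
  "hit_within q a m n s = {\<omega>. \<exists>k\<le>m. jump_chain q n \<omega> k \<le> a \<and> jump_time q n \<omega> k < s}"

lemma sets_hit_within [measurable]: "hit_within q a m n s \<in> sets path_space"
proof -
  have "hit_within q a m n s =
      (\<Union>k\<le>m. {\<omega>\<in>space path_space. jump_chain q n \<omega> k \<le> a \<and> jump_time q n \<omega> k < s})"
    by (auto simp: hit_within_def)
  also have "\<dots> \<in> sets path_space" by measurable
  finally show ?thesis .
qed

lemma incseq_hit_within: "incseq (\<lambda>m. hit_within q a m n s)"
  by (rule incseq_SucI) (auto simp: hit_within_def intro: le_SucI)

lemma hit_within_0: "hit_within q a 0 n s = (if n \<le> a \<and> 0 < s then UNIV else {})"
  by (auto simp: hit_within_def jump_time_def)

lemma Stream_in_hit_within_Suc: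
  "x ## \<omega> \<in> hit_within q a (Suc m) n s \<longleftrightarrow>
     (n \<le> a \<and> 0 < s) \<or> \<omega> \<in> hit_within q a m (jump_step q n (fst x)) (s + ln (snd x) / qtot q n)"
proof -
  have ex_le_Suc: "(\<exists>k\<le>Suc m. P k) \<longleftrightarrow> P 0 \<or> (\<exists>k\<le>m. P (Suc k))" for P :: "nat \<Rightarrow> bool"
    by (metis Suc_le_mono le0 not0_implies_Suc)
  have shift: "- ln (snd x) / qtot q n + t < s \<longleftrightarrow> t < s + ln (snd x) / qtot q n" for t
    by linarith
  show ?thesis
    unfolding hit_within_def mem_Collect_eq ex_le_Suc jump_chain_Stream_Suc jump_time_Stream_Suc shift
    by (simp add: jump_time_def)
qed

text \<open>First-step analysis: the first pair \<open>(U, V)\<close> fixes the first jump target and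
  holding time, and the rest of the stream drives the chain restarted there.\<close>
lemma emeasure_hit_within_Suc:
  "emeasure path_space (hit_within q a (Suc m) n s) =
    (\<integral>\<^sup>+x. (if n \<le> a \<and> 0 < s then 1 else
      emeasure path_space (hit_within q a m (jump_step q n (fst x)) (s + ln (snd x) / qtot q n)))
     \<partial>(unif01 \<Otimes>\<^sub>M unif01))"
proof -
  interpret P: prob_space "unif01 \<Otimes>\<^sub>M unif01" by (rule prob_space_unif01_pair)
  have "emeasure path_space (hit_within q a (Suc m) n s) =
      (\<integral>\<^sup>+\<omega>. indicator (hit_within q a (Suc m) n s) \<omega> \<partial>path_space)"
    by simp
  also have "\<dots> = (\<integral>\<^sup>+x. (\<integral>\<^sup>+\<omega>. indicator (hit_within q a (Suc m) n s) (x ## \<omega>) \<partial>path_space)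
      \<partial>(unif01 \<Otimes>\<^sub>M unif01))"
    unfolding path_space_def
    by (rule P.nn_integral_stream_space) (simp flip: path_space_def)
  also have "\<dots> = (\<integral>\<^sup>+x. (if n \<le> a \<and> 0 < s then 1 else
      emeasure path_space (hit_within q a m (jump_step q n (fst x)) (s + ln (snd x) / qtot q n)))
     \<partial>(unif01 \<Otimes>\<^sub>M unif01))"
  proof (rule nn_integral_cong)
    fix x :: "real \<times> real"
    have "(\<lambda>\<omega>. indicator (hit_within q a (Suc m) n s) (x ## \<omega>) :: ennreal) =
        (if n \<le> a \<and> 0 < s then (\<lambda>_. 1)
         else indicator (hit_within q a m (jump_step q n (fst x)) (s + ln (snd x) / qtot q n)))"
      by (auto simp: Stream_in_hit_within_Suc indicator_def)
    then show "(\<integral>\<^sup>+\<omega>. indicator (hit_within q a (Suc m) n s) (x ## \<omega>) \<partial>path_space) =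
        (if n \<le> a \<and> 0 < s then 1 else
         emeasure path_space (hit_within q a m (jump_step q n (fst x)) (s + ln (snd x) / qtot q n)))"
      using prob_space.emeasure_space_1[OF prob_space_path_space] by simp
  qed
  finally show ?thesis .
qed

lemma gen_divide: "gen q (\<lambda>j. g j / c) n = gen q g n / c"
proof -
  have "gen q (\<lambda>j. g j / c) n = infsum (\<lambda>j. q n j * (g j - g n) * inverse c) (states - {n})"
    unfolding gen_def by (rule infsum_cong) (simp add: divide_inverse algebra_simps)
  also have "\<dots> = gen q g n / c"
    unfolding gen_def divide_inverse by (rule infsum_cmult_left')
  finally show ?thesis .
qed

section \<open>The jump chain and the supermartingale bound\<close>

locale jump_rates =
  fixes q :: "nat \<Rightarrow> nat \<Rightarrow> real"
  assumes rate_nonneg: "\<And>i j. i \<in> states \<Longrightarrow> j \<in> states \<Longrightarrow> i \<noteq> j \<Longrightarrow> q i j \<ge> 0"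
    and rate_summable: "\<And>i. i \<in> states \<Longrightarrow> (\<lambda>j. q i j) summable_on (states - {i})"
    and irreducible: "irreducible_rates q"
begin

lemma qtot_pos: assumes i: "i \<in> states" shows "qtot q i > 0"
proof -
  let ?R = "{(k, l). k \<in> states \<and> l \<in> states \<and> k \<noteq> l \<and> q k l > 0}"
  have "Suc i \<in> states"
    by (simp add: states_def)
  then have "(i, Suc i) \<in> ?R\<^sup>*"
    using irreducible i unfolding irreducible_rates_def by blast
  then obtain j where j: "j \<in> states - {i}" "q i j > 0"
    by (rule converse_rtranclE) auto
  have "infsum (\<lambda>j. q i j) {j} \<le> infsum (\<lambda>j. q i j) (states - {i})"
    by (rule infsum_mono_neutral) (use rate_summable[OF i] j rate_nonneg[OF i] in auto)
  then show ?thesis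
    using j by (simp add: qtot_def)
qed

definition off_rate :: "nat \<Rightarrow> nat \<Rightarrow> real" where
  "off_rate i j = (if j \<in> states \<and> j \<noteq> i then q i j else 0)"

definition cum_rate :: "nat \<Rightarrow> nat \<Rightarrow> real" where
  "cum_rate i n = (\<Sum>j\<le>n. off_rate i j)"

lemma off_rate_nonneg: "i \<in> states \<Longrightarrow> off_rate i j \<ge> 0"
  unfolding off_rate_def using rate_nonneg by auto

lemma has_sum_off_rate_iff:
  "(off_rate i has_sum x) UNIV \<longleftrightarrow> (q i has_sum x) (states - {i})"
  by (rule has_sum_cong_neutral) (auto simp: off_rate_def)

lemma off_rate_sums: "i \<in> states \<Longrightarrow> off_rate i sums qtot q i"
  using has_sum_infsum[OF rate_summable] unfolding qtot_def
  by (intro has_sum_imp_sums) (simp add: has_sum_off_rate_iff)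

lemma cum_rate_mono: "i \<in> states \<Longrightarrow> m \<le> n \<Longrightarrow> cum_rate i m \<le> cum_rate i n"
  unfolding cum_rate_def by (rule sum_mono2) (auto intro: off_rate_nonneg)

lemma cum_rate_tendsto: "i \<in> states \<Longrightarrow> cum_rate i \<longlonglongrightarrow> qtot q i"
  using off_rate_sums unfolding sums_def cum_rate_def by (rule LIMSEQ_lessThan_iff_atMost[THEN iffD1])

lemma cum_rate_0 [simp]: "cum_rate i 0 = 0"
  by (simp add: cum_rate_def off_rate_def states_def)

lemma cum_rate_diff: "cum_rate i j - cum_rate i (j - 1) = off_rate i j"
  by (cases j) (simp_all add: cum_rate_def off_rate_def states_def)

lemma jump_step_cum_rate:
  "jump_step q i u = (LEAST j. j \<in> states \<and> j \<noteq> i \<and> u * qtot q i < cum_rate i j)"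
proof -
  have partial_sum: "(\<Sum>k\<in>{1..n} - {i}. q i k) = cum_rate i n" for n
    unfolding cum_rate_def by (rule sum.mono_neutral_cong_left) (auto simp: off_rate_def states_def)
  show ?thesis
    unfolding jump_step_def partial_sum ..
qed

lemma cum_rate_self: "cum_rate i i = cum_rate i (i - 1)"
  using cum_rate_diff[of i i] by (simp add: off_rate_def)

lemma ex_cum_rate_gt: assumes "i \<in> states" "u < 1" shows "\<exists>j. u * qtot q i < cum_rate i j"
proof -
  have "u * qtot q i < qtot q i"
    using assms qtot_pos by simp
  then have "\<forall>\<^sub>F j in sequentially. u * qtot q i < cum_rate i j"
    by (rule order_tendstoD(1)[OF cum_rate_tendsto[OF assms(1)]])
  then show ?thesis
    by (meson eventually_sequentially order_refl)
qed

text \<open>The selected state is the first one whose cumulative rate exceeds \<open>u * qtot q i\<close>: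
  the side conditions in the definition of \<open>jump_step\<close> are automatic, because \<open>cum_rate i\<close>
  vanishes at \<open>0\<close> and does not increase at \<open>i\<close>.\<close>
lemma jump_step_eq_Least:
  assumes i: "i \<in> states" and u: "0 < u" "u < 1"
  shows "jump_step q i u = (LEAST j. u * qtot q i < cum_rate i j)"
proof -
  define J where "J = (LEAST j. u * qtot q i < cum_rate i j)"
  have uQ: "0 < u * qtot q i"
    using u qtot_pos[OF i] by simp
  have J: "u * qtot q i < cum_rate i J"
    unfolding J_def using ex_cum_rate_gt[OF i u(2)] by (rule LeastI_ex)
  have below_J: "cum_rate i k \<le> u * qtot q i" if "k < J" for k
    using not_less_Least[of k "\<lambda>j. u * qtot q i < cum_rate i j"] that unfolding J_def by simp
  have "J \<noteq> 0"
    using J uQ by (intro notI) simp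
  moreover have "J \<noteq> i"
    using J below_J[of "i - 1"] cum_rate_self[of i] \<open>J \<noteq> 0\<close> by (intro notI) simp
  ultimately have "J \<in> states \<and> J \<noteq> i \<and> u * qtot q i < cum_rate i J"
    using J by (simp add: states_def)
  then show ?thesis
    unfolding jump_step_cum_rate J_def[symmetric]
  proof (rule Least_equality)
    fix j assume "j \<in> states \<and> j \<noteq> i \<and> u * qtot q i < cum_rate i j"
    then show "J \<le> j"
      using below_J[of j] by linarith
  qed
qed

lemma jump_step_bounds:
  assumes i: "i \<in> states" and u: "0 < u" "u < 1"
  shows "jump_step q i u \<in> states"
    and "cum_rate i (jump_step q i u - 1) \<le> u * qtot q i"
    and "u * qtot q i < cum_rate i (jump_step q i u)"
proof -
  define J where "J = jump_step q i u"
  have J_Least: "J = (LEAST j. u * qtot q i < cum_rate i j)"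
    unfolding J_def by (rule jump_step_eq_Least[OF assms])
  show upper: "u * qtot q i < cum_rate i (jump_step q i u)"
    unfolding J_def[symmetric] J_Least using ex_cum_rate_gt[OF i u(2)] by (rule LeastI_ex)
  moreover have "0 < u * qtot q i"
    using u qtot_pos[OF i] by simp
  ultimately have "J \<noteq> 0"
    unfolding J_def by (intro notI) simp
  then show "jump_step q i u \<in> states"
    unfolding J_def by (simp add: states_def)
  show "cum_rate i (jump_step q i u - 1) \<le> u * qtot q i"
    using not_less_Least[of "J - 1" "\<lambda>j. u * qtot q i < cum_rate i j"] \<open>J \<noteq> 0\<close>
    unfolding J_def[symmetric] J_Least[symmetric] by simp
qed

lemma jump_step_iff:
  assumes i: "i \<in> states" and u: "0 < u" "u < 1"
  shows "cum_rate i (j - 1) \<le> u * qtot q i \<and> u * qtot q i < cum_rate i j \<longleftrightarrow> j = jump_step q i u"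
proof
  assume j: "cum_rate i (j - 1) \<le> u * qtot q i \<and> u * qtot q i < cum_rate i j"
  show "j = jump_step q i u"
    unfolding jump_step_eq_Least[OF assms]
  proof (rule Least_equality[symmetric])
    fix k assume "u * qtot q i < cum_rate i k"
    then show "j \<le> k"
      using j cum_rate_mono[OF i, of k "j - 1"] by (cases "k \<le> j - 1") auto
  qed (use j in simp)
qed (use jump_step_bounds[OF assms] in simp)

definition jump_interval :: "nat \<Rightarrow> nat \<Rightarrow> real set" where
  "jump_interval i j = {u. cum_rate i (j - 1) \<le> u * qtot q i \<and> u * qtot q i < cum_rate i j}"

lemma sets_jump_interval [measurable]: "jump_interval i j \<in> sets borel"
proof -
  have "jump_interval i j =
      {u \<in> space borel. cum_rate i (j - 1) \<le> u * qtot q i \<and> u * qtot q i < cum_rate i j}"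
    by (simp add: jump_interval_def)
  also have "\<dots> \<in> sets borel" by measurable
  finally show ?thesis .
qed

lemma emeasure_jump_interval_le:
  assumes i: "i \<in> states"
  shows "emeasure unif01 (jump_interval i j) \<le> ennreal (off_rate i j / qtot q i)"
proof -
  define Q where "Q = qtot q i"
  have Q: "Q > 0"
    using qtot_pos[OF i] by (simp add: Q_def)
  have interval: "jump_interval i j = {cum_rate i (j - 1) / Q ..< cum_rate i j / Q}"
    using Q by (auto simp: jump_interval_def Q_def field_simps)
  have "emeasure unif01 (jump_interval i j) = emeasure lborel ({0<..<1} \<inter> jump_interval i j)"
    unfolding unif01_def by (subst emeasure_uniform_measure) (auto simp: divide_ennreal_def)
  also have "\<dots> \<le> emeasure lborel (jump_interval i j)"
    by (rule emeasure_mono) auto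
  also have "\<dots> = ennreal (cum_rate i j / Q - cum_rate i (j - 1) / Q)"
    unfolding interval using cum_rate_mono[OF i, of "j - 1" j] Q by (simp add: divide_right_mono)
  also have "cum_rate i j / Q - cum_rate i (j - 1) / Q = off_rate i j / Q"
    using cum_rate_diff[of i j] by (simp add: diff_divide_distrib[symmetric])
  finally show ?thesis
    by (simp add: Q_def)
qed

lemma nn_integral_jump_step_le:
  fixes f :: "nat \<Rightarrow> ennreal"
  assumes i: "i \<in> states"
  shows "(\<integral>\<^sup>+u. f (jump_step q i u) \<partial>unif01) \<le> (\<Sum>j. ennreal (off_rate i j / qtot q i) * f j)"
proof -
  have "(\<integral>\<^sup>+u. f (jump_step q i u) \<partial>unif01) = (\<integral>\<^sup>+u. (\<Sum>j. f j * indicator (jump_interval i j) u) \<partial>unif01)"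
  proof (rule nn_integral_cong_AE)
    show "AE u in unif01. f (jump_step q i u) = (\<Sum>j. f j * indicator (jump_interval i j) u)"
      using AE_unif01
    proof eventually_elim
      case (elim u)
      then have "(\<lambda>j. f j * indicator (jump_interval i j) u) = (\<lambda>j. if j = jump_step q i u then f j else 0)"
        using jump_step_iff[OF i] by (auto simp: jump_interval_def indicator_def)
      then show ?case
        using sums_unique[OF sums_single[of "jump_step q i u" f]] by simp
    qed
  qed
  also have "\<dots> = (\<Sum>j. f j * emeasure unif01 (jump_interval i j))"
    by (subst nn_integral_suminf) (simp_all add: nn_integral_cmult_indicator)
  also have "\<dots> \<le> (\<Sum>j. ennreal (off_rate i j / qtot q i) * f j)"
    by (intro suminf_le) (auto simp: mult.commute intro!: mult_left_mono emeasure_jump_interval_le[OF i])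
  finally show ?thesis .
qed

lemma summable_on_rate_mult:
  assumes i: "i \<in> states" and g: "\<And>j. j \<in> states \<Longrightarrow> 0 \<le> g j \<and> g j \<le> B"
  shows "(\<lambda>j. q i j * g j) summable_on (states - {i})"
  using summable_on_cmult_right[OF rate_summable[OF i], of B]
proof (rule summable_on_comparison_test)
  fix j assume "j \<in> states - {i}"
  then show "q i j * g j \<le> B * q i j" "0 \<le> q i j * g j"
    using rate_nonneg[OF i, of j] g[of j] by (simp_all add: mult.commute mult_right_mono)
qed

lemma infsum_rate_mult_eq_gen:
  assumes i: "i \<in> states" and g: "\<And>j. j \<in> states \<Longrightarrow> 0 \<le> g j \<and> g j \<le> B"
  shows "infsum (\<lambda>j. q i j * g j) (states - {i}) = gen q g i + qtot q i * g i"
proof -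
  have "gen q g i = infsum (\<lambda>j. q i j * g j + - (q i j * g i)) (states - {i})"
    unfolding gen_def by (rule infsum_cong) (simp add: algebra_simps)
  also have "\<dots> = infsum (\<lambda>j. q i j * g j) (states - {i}) + infsum (\<lambda>j. - (q i j * g i)) (states - {i})"
    by (rule infsum_add[OF summable_on_rate_mult[OF assms] summable_on_uminus[THEN iffD2,
          OF summable_on_cmult_left[OF rate_summable[OF i]]]])
  also have "\<dots> = infsum (\<lambda>j. q i j * g j) (states - {i}) - qtot q i * g i"
    by (simp add: qtot_def infsum_uminus infsum_cmult_left[OF rate_summable[OF i]])
  finally show ?thesis
    by simp
qed

lemma nn_integral_g_jump_step_le:
  assumes i: "i \<in> states" and g: "\<And>j. j \<in> states \<Longrightarrow> 0 \<le> g j \<and> g j \<le> B"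
  shows "(\<integral>\<^sup>+u. ennreal (g (jump_step q i u)) \<partial>unif01) \<le> ennreal ((gen q g i + qtot q i * g i) / qtot q i)"
proof -
  define Q where "Q = qtot q i"
  have Q: "Q > 0"
    using qtot_pos[OF i] by (simp add: Q_def)
  have "((\<lambda>j. q i j * g j) has_sum (gen q g i + qtot q i * g i)) (states - {i})"
    using has_sum_infsum[OF summable_on_rate_mult[OF assms]] by (simp add: infsum_rate_mult_eq_gen[OF assms])
  then have "((\<lambda>j. off_rate i j * g j) has_sum (gen q g i + Q * g i)) UNIV"
    unfolding Q_def by (subst has_sum_cong_neutral[where T="states - {i}"]) (auto simp: off_rate_def)
  then have sums: "(\<lambda>j. off_rate i j * g j / Q) sums ((gen q g i + Q * g i) / Q)"
    by (intro sums_divide has_sum_imp_sums)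
  have "(\<integral>\<^sup>+u. ennreal (g (jump_step q i u)) \<partial>unif01) \<le> (\<Sum>j. ennreal (off_rate i j / Q) * ennreal (g j))"
    unfolding Q_def by (rule nn_integral_jump_step_le[OF i])
  also have "\<dots> = (\<Sum>j. ennreal (off_rate i j * g j / Q))"
  proof (rule suminf_cong)
    fix j
    show "ennreal (off_rate i j / Q) * ennreal (g j) = ennreal (off_rate i j * g j / Q)"
    proof (cases "j \<in> states \<and> j \<noteq> i")
      case True
      then have "0 \<le> off_rate i j / Q" "0 \<le> g j"
        using off_rate_nonneg[OF i] g Q by auto
      then show ?thesis
        by (simp add: ennreal_mult[symmetric] mult.commute)
    next
      case False
      have "off_rate i j = 0"
        unfolding off_rate_def by (rule if_not_P[OF False])
      then show ?thesis
        by simp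
    qed
  qed
  also have "\<dots> = ennreal ((gen q g i + Q * g i) / Q)"
  proof -
    have "0 \<le> off_rate i j * g j / Q" for j
      using off_rate_nonneg[OF i, of j] g[of j] Q unfolding off_rate_def by (cases "j \<in> states") auto
    then show ?thesis
      using sums by (subst suminf_ennreal2) (auto simp: sums_iff)
  qed
  finally show ?thesis
    by (simp add: Q_def)
qed

text \<open>One step of the supermartingale \<open>exp (-l J\<^sub>k) g (X\<^sub>k)\<close>.\<close>
lemma nn_integral_exp_drift_step_le:
  assumes i: "i \<in> states" and g: "\<And>j. j \<in> states \<Longrightarrow> 0 \<le> g j \<and> g j \<le> B"
    and drift: "gen q g i \<le> l * g i" and l: "l \<ge> 0"
  shows "(\<integral>\<^sup>+x. ennreal (exp (l * (s + ln (snd x) / qtot q i)) * g (jump_step q i (fst x)))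
           \<partial>(unif01 \<Otimes>\<^sub>M unif01)) \<le> ennreal (exp (l * s) * g i)"
proof -
  define Q where "Q = qtot q i"
  have Q: "Q > 0"
    using qtot_pos[OF i] by (simp add: Q_def)
  define G where "G u = ennreal (exp (l * s)) * ennreal (g (jump_step q i u))" for u
  define H where "H v = ennreal (exp (l * (ln v / Q)))" for v
  have [measurable]: "G \<in> borel_measurable borel" "H \<in> borel_measurable borel"
    unfolding G_def H_def by measurable
  have "(\<integral>\<^sup>+x. ennreal (exp (l * (s + ln (snd x) / Q)) * g (jump_step q i (fst x))) \<partial>(unif01 \<Otimes>\<^sub>M unif01))
      = (\<integral>\<^sup>+x. G (fst x) * H (snd x) \<partial>(unif01 \<Otimes>\<^sub>M unif01))"
    by (intro nn_integral_cong)
       (simp add: G_def H_def distrib_left exp_add ennreal_mult' mult_ac flip: ennreal_mult')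
  also have "\<dots> = (\<integral>\<^sup>+u. G u \<partial>unif01) * (\<integral>\<^sup>+v. H v \<partial>unif01)"
    by (rule nn_integral_unif01_pair_mult) measurable
  also have "\<dots> = ennreal (exp (l * s)) * (\<integral>\<^sup>+u. ennreal (g (jump_step q i u)) \<partial>unif01) * ennreal (Q / (Q + l))"
    unfolding H_def nn_integral_unif01_exp_ln[OF Q l] unfolding G_def by (simp add: nn_integral_cmult)
  also have "\<dots> \<le> ennreal (exp (l * s)) * ennreal ((gen q g i + Q * g i) / Q) * ennreal (Q / (Q + l))"
    unfolding Q_def by (intro mult_mono order_refl nn_integral_g_jump_step_le[OF assms(1,2)]) auto
  also have "\<dots> = ennreal (exp (l * s) * ((gen q g i + Q * g i) / (Q + l)))"
  proof -
    have "Q \<noteq> 0" "Q + l \<noteq> 0"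
      using Q l by auto
    then have "(gen q g i + Q * g i) / Q * (Q / (Q + l)) = (gen q g i + Q * g i) / (Q + l)"
      by simp
    then show ?thesis
      using Q l by (simp add: mult.assoc ennreal_mult''[symmetric] ennreal_mult'[symmetric])
  qed
  also have "\<dots> \<le> ennreal (exp (l * s) * g i)"
  proof -
    have "(gen q g i + Q * g i) / (Q + l) \<le> g i"
      using drift Q l by (simp add: divide_le_eq algebra_simps)
    then show ?thesis
      by (intro ennreal_leI mult_left_mono) auto
  qed
  finally show ?thesis
    by (simp add: Q_def)
qed

lemma emeasure_hit_within_nonpos:
  assumes "i \<in> states" "s \<le> 0"
  shows "emeasure path_space (hit_within q a m i s) = 0"
  using assms
proof (induction m arbitrary: i s)
  case 0
  then show ?case
    by (simp add: hit_within_0)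
next
  case (Suc m)
  have "AE x in unif01 \<Otimes>\<^sub>M unif01.
      emeasure path_space (hit_within q a m (jump_step q i (fst x)) (s + ln (snd x) / qtot q i)) = 0"
    using AE_unif01_pair
  proof eventually_elim
    case (elim x)
    have "ln (snd x) / qtot q i \<le> 0"
      using elim qtot_pos[OF Suc.prems(1)] by (simp add: divide_nonpos_pos)
    then show ?case
      using Suc elim jump_step_bounds(1)[OF Suc.prems(1)] by simp
  qed
  then have "(\<integral>\<^sup>+x. emeasure path_space (hit_within q a m (jump_step q i (fst x)) (s + ln (snd x) / qtot q i))
      \<partial>(unif01 \<Otimes>\<^sub>M unif01)) = 0"
    by (simp add: nn_integral_cong_AE)
  then show ?case
    using Suc.prems by (simp add: emeasure_hit_within_Suc)
qed

text \<open>The optional stopping argument for the supermartingale \<open>exp (-l J\<^sub>k) g (X\<^sub>k)\<close>,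
  run up to the \<open>m\<close>-th jump, by induction on \<open>m\<close>; \<open>g \<ge> 1\<close> below \<open>a\<close> turns
  the expected terminal value into a bound on the hitting probability.\<close>
lemma emeasure_hit_within_le:
  assumes g: "\<And>j. j \<in> states \<Longrightarrow> 0 \<le> g j \<and> g j \<le> B"
    and g_ge_1: "\<And>j. j \<in> states \<Longrightarrow> j \<le> a \<Longrightarrow> 1 \<le> g j"
    and drift: "\<And>j. j \<in> states \<Longrightarrow> a < j \<Longrightarrow> gen q g j \<le> l * g j" and l: "l \<ge> 0"
    and i: "i \<in> states"
  shows "emeasure path_space (hit_within q a m i s) \<le> ennreal (exp (l * s) * g i)"
proof -
  have below_a: "emeasure path_space (hit_within q a m i s) \<le> ennreal (exp (l * s) * g i)"
    if "i \<in> states" "i \<le> a" for m i s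
  proof (cases "s \<le> 0")
    case True
    then show ?thesis
      using emeasure_hit_within_nonpos[OF that(1)] by simp
  next
    case False
    have "1 * 1 \<le> exp (l * s) * g i"
      using False l g_ge_1[OF that] by (intro mult_mono) auto
    then have "1 \<le> ennreal (exp (l * s) * g i)"
      using ennreal_leI[of 1] by simp
    then show ?thesis
      by (rule order.trans[OF prob_space.emeasure_le_1[OF prob_space_path_space]])
  qed
  show ?thesis
    using i
  proof (induction m arbitrary: i s)
    case 0
    show ?case
    proof (cases "i \<le> a")
      case True
      then show ?thesis
        by (rule below_a[OF 0])
    qed (simp add: hit_within_0)
  next
    case (Suc m)
    show ?case
    proof (cases "i \<le> a")
      case False
      have "emeasure path_space (hit_within q a (Suc m) i s) \<le>
          (\<integral>\<^sup>+x. ennreal (exp (l * (s + ln (snd x) / qtot q i)) * g (jump_step q i (fst x)))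
            \<partial>(unif01 \<Otimes>\<^sub>M unif01))"
        unfolding emeasure_hit_within_Suc using False
        by (intro nn_integral_mono_AE, use AE_unif01_pair in eventually_elim)
           (auto intro: Suc.IH jump_step_bounds(1)[OF Suc.prems])
      also have "\<dots> \<le> ennreal (exp (l * s) * g i)"
        using False drift[OF Suc.prems] by (intro nn_integral_exp_drift_step_le[OF Suc.prems g _ l]) auto
      finally show ?thesis .
    qed (rule below_a[OF Suc.prems])
  qed
qed

end

lemma measure_hit_below_event_le:
  assumes "a \<le> real a'" "0 \<le> x" "\<And>m. emeasure path_space (hit_within q a' m n t) \<le> ennreal x"
  shows "measure path_space (hit_below_event q n a t) \<le> x"
proof -
  have "hit_below_event q n a t \<subseteq> (\<Union>m. hit_within q a' m n t)"
  proof
    fix \<omega> assume "\<omega> \<in> hit_below_event q n a t"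
    then obtain k where "real (jump_chain q n \<omega> k) \<le> a" "jump_time q n \<omega> k < t"
      unfolding hit_below_event_def by blast
    then have "\<omega> \<in> hit_within q a' k n t"
      using assms(1) unfolding hit_within_def by (auto intro!: exI[of _ k])
    then show "\<omega> \<in> (\<Union>m. hit_within q a' m n t)"
      by blast
  qed
  then have "emeasure path_space (hit_below_event q n a t) \<le> emeasure path_space (\<Union>m. hit_within q a' m n t)"
    by (rule emeasure_mono) measurable
  also have "\<dots> = (SUP m. emeasure path_space (hit_within q a' m n t))"
    by (rule SUP_emeasure_incseq[symmetric]) (auto simp: incseq_hit_within)
  also have "\<dots> \<le> ennreal x"
    by (rule SUP_least) (rule assms(3))
  finally show ?thesis
    unfolding measure_def using assms(2) by (rule enn2real_leI[rotated])
qed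

lemma (in jump_rates) measure_hit_below_event_le_exp:
  assumes g: "\<And>j. j \<in> states \<Longrightarrow> 0 < g j \<and> g j \<le> B"
    and c: "c > 0" "\<And>j. j \<in> states \<Longrightarrow> j \<le> a' \<Longrightarrow> c \<le> g j"
    and drift: "\<And>j. j \<in> states \<Longrightarrow> a' < j \<Longrightarrow> gen q g j \<le> l * g j" and l: "l \<ge> 0"
    and a: "a \<le> real a'" and n: "n \<in> states"
  shows "measure path_space (hit_below_event q n a t) \<le> exp (l * t) * (g n / c)"
proof (rule measure_hit_below_event_le[OF a])
  show "0 \<le> exp (l * t) * (g n / c)"
    using g[OF n] c by simp
  fix m
  show "emeasure path_space (hit_within q a' m n t) \<le> ennreal (exp (l * t) * (g n / c))"
  proof (rule emeasure_hit_within_le[OF _ _ _ l n])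
    show "0 \<le> g j / c \<and> g j / c \<le> B / c" if "j \<in> states" for j
      using g[OF that] c by (simp add: divide_right_mono)
    show "1 \<le> g j / c" if "j \<in> states" "j \<le> a'" for j
      using c(2)[OF that] c(1) by simp
    show "gen q (\<lambda>j. g j / c) j \<le> l * (g j / c)" if "j \<in> states" "a' < j" for j
      using drift[OF that] c(1) by (simp add: gen_divide divide_right_mono)
  qed
qed

lemma ex_pos_lower_bound:
  fixes f :: "'a \<Rightarrow> real"
  assumes "finite S" "\<And>x. x \<in> S \<Longrightarrow> 0 < f x"
  shows "\<exists>c>0. \<forall>x\<in>S. c \<le> f x"
proof -
  have "0 < Min (insert 1 (f ` S))"
    using assms by (subst Min_gr_iff) auto
  moreover have "\<forall>x\<in>S. Min (insert 1 (f ` S)) \<le> f x"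
    using assms(1) by (auto intro: Min_le)
  ultimately show ?thesis
    by blast
qed

lemma ex_state_above: "\<exists>n\<in>states. x \<le> real n \<and> N \<le> n \<and> A \<le> n"
proof
  let ?n = "max (nat \<lceil>x\<rceil>) (max N (max A 1))"
  have "x \<le> real (nat \<lceil>x\<rceil>)"
    by (rule real_nat_ceiling_ge)
  also have "\<dots> \<le> real ?n"
    by simp
  finally show "x \<le> real ?n \<and> N \<le> ?n \<and> A \<le> ?n"
    by (simp add: le_max_iff_disj)
  show "?n \<in> states"
    by (simp add: states_def)
qed

theorem proposition4p3:
  fixes q :: "nat \<Rightarrow> nat \<Rightarrow> real" and g d :: "nat \<Rightarrow> real"
  assumes rates_nonneg: "\<And>i j. i \<in> states \<Longrightarrow> j \<in> states \<Longrightarrow> i \<noteq> j \<Longrightarrow> q i j \<ge> 0"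
    and rates_stable: "\<And>i. i \<in> states \<Longrightarrow> (\<lambda>j. q i j) summable_on (states - {i})"
    and irred: "irreducible_rates q"
    and g_pos: "\<And>n. n \<in> states \<Longrightarrow> g n > 0"
    and g_bdd: "\<exists>B. \<forall>n\<in>states. g n \<le> B"
    and g_lim: "g \<longlonglongrightarrow> 0"
    and d_pos: "\<exists>N. \<forall>n\<in>states. n \<ge> N \<longrightarrow> d n > 0"
    and drift: "\<exists>A. \<forall>a\<in>states. a \<ge> A \<longrightarrow> (\<forall>n\<in>states. n > a \<longrightarrow> gen q g n \<le> d a * g n)"
  shows "\<forall>a t. a > 0 \<and> t > 0 \<longrightarrow>
           (\<lambda>n. measure path_space (hit_below_event q n a t)) \<longlonglongrightarrow> 0"
proof (intro allI impI)
  fix a t :: real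
  assume "a > 0 \<and> t > 0"
  interpret jump_rates q
    using rates_nonneg rates_stable irred by unfold_locales
  obtain B N A where B: "\<forall>n\<in>states. g n \<le> B" and N: "\<forall>n\<in>states. n \<ge> N \<longrightarrow> d n > 0"
    and A: "\<forall>a\<in>states. a \<ge> A \<longrightarrow> (\<forall>n\<in>states. n > a \<longrightarrow> gen q g n \<le> d a * g n)"
    using g_bdd d_pos drift by blast
  obtain a' where a': "a' \<in> states" "a \<le> real a'" "N \<le> a'" "A \<le> a'"
    using ex_state_above by blast
  then have l: "d a' > 0"
    using N by blast
  obtain c where c: "c > 0" "\<forall>j\<in>{1..a'}. c \<le> g j"
    using ex_pos_lower_bound[of "{1..a'}" g] g_pos by (auto simp: states_def)
  have bound: "measure path_space (hit_below_event q n a t) \<le> exp (d a' * t) * (g n / c)"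
    if "n \<in> states" for n
  proof (rule measure_hit_below_event_le_exp[where B=B and c=c and a'=a' and l="d a'"])
    show "gen q g j \<le> d a' * g j" if "j \<in> states" "a' < j" for j
      using A a' that by blast
    show "c \<le> g j" if "j \<in> states" "j \<le> a'" for j
      using c(2) that by (simp add: states_def)
  qed (use B g_pos c(1) l a' that in auto)
  have lim: "(\<lambda>n. exp (d a' * t) * (g n / c)) \<longlonglongrightarrow> 0"
    using g_lim by (intro tendsto_mult_right_zero tendsto_divide_zero)
  have upper: "\<forall>\<^sub>F n in sequentially. measure path_space (hit_below_event q n a t) \<le> exp (d a' * t) * (g n / c)"
    using eventually_ge_at_top[of "1::nat"] by eventually_elim (rule bound, simp add: states_def)
  show "(\<lambda>n. measure path_space (hit_below_event q n a t)) \<longlonglongrightarrow> 0"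
    by (rule tendsto_sandwich[OF _ upper tendsto_const lim]) simp
qed

end
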